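(* Assume the setting described in the context, with $\rho$ atomic and $(\rho,\sim)$ weakly commutative. Fix a deterministic strategy $\Lambda$, an initial distribution $\omega^{\mathrm{init}}$, a permutation $\pi$ of $F$ and an integer $t$. Then there exist a set $\mathrm{Bad}_\pi(t)$ of $\pi$-stable walks and a swapping mapping $\Phi:\mathrm{Bad}(t)\to\mathrm{Bad}_\pi(t)$ that is a bijection.
   Context: Setting: $\Omega$ is a finite set and $F$ a finite set of flaws, each a nonempty subset of $\Omega$; $F_\sigma=\{f:\sigma\in f\}$. For $\sigma\in\Omega$ and $f\in F_\sigma$ there is a probability distribution $\rho(\cdot\mid f,\sigma)$ with support $A(f,\sigma)$. We write $\sigma\xrightarrow{f}\sigma'$ when $f\in F_\sigma$ and $\sigma'\in A(f,\sigma)$. A walk is a sequence $\sigma_1\xrightarrow{w_1}\sigma_2\cdots\xrightarrow{w_t}\sigma_{t+1}$ of such steps; its word is $w_1\ldots w_t$ and its length is $t$. $\sim$ is a symmetric relation on $F$ (loops allowed), with $\Gamma(f)=\{g:f\sim g\}$, $\Gamma^+(f)=\Gamma(f)\cup\{f\}$ and $\Gamma^+(S)=\bigcup_{f\in S}\Gamma^+(f)$. It is assumed that for every step $\sigma\xrightarrow{f}\sigma'$, $F_{\sigma'}\subseteq(F_\sigma\setminus\{f\})\cup\Gamma(f)$. Independent sets are sets $S$ with $f\not\sim g$ for distinct $f,g\in S$, and $\mathrm{Ind}(F)$ is the family of independent sets. Write $f\cong g$ if $f\sim g$ or $f=g$. $\rho$ is atomic if for every $f$ and $\sigma'$ there is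 at most one $\sigma$ with $\sigma\xrightarrow{f}\sigma'$. $(\rho,\sim)$ is weakly commutative if there is an injective map SWAP sending each walk $\sigma_1\xrightarrow{f}\sigma_2\xrightarrow{g}\sigma_3$ with $f\not\sim g$ to a walk $\sigma_1\xrightarrow{g}\sigma_2'\xrightarrow{f}\sigma_3$; fix such a map. A valid swap applied to a walk replaces a consecutive subwalk $\sigma_1\xrightarrow{f}\sigma_2\xrightarrow{g}\sigma_3$ with $f\not\cong g$ by its SWAP image. A swapping mapping is a map on a set of walks that sends each walk to the result of applying some sequence of valid swaps to it. A deterministic strategy assigns to each walk $\sigma_1\xrightarrow{w_1}\cdots\sigma_i$ whose last state is flawed a flaw in $F_{\sigma_i}$. A walk follows the strategy if each $w_i$ is the flaw assigned to its prefix ending at $\sigma_i$. $\mathrm{Bad}(t)$ is the set of walks of length $t$ that start at a state $\sigma_1$ with $\omega^{\mathrm{init}}(\sigma_1)>0$ and follow $\Lambda$; equivalently, the walks of length $t$ produced with positive probability by Algorithm 1 (sample $\sigma$ from $\omega^{\mathrm{init}}$; while $F_\sigma\neq\varnothing$, choose $f\in F_\sigma$ by $\Lambda$ and move to $\sigma'$ sampled from $\rho(\cdot\mid f,\sigma)$). Stable and $\pi$-stable words: a sequence of sets $(I_1,\ldots,I_s)$ with $s\ge1$ is stable if each $I_r\in\mathrm{Ind}(F)$ and $I_{r+1}\subseteq\Gamma^+(I_r)$. A word $W$ is stable if $W=W_1\ldots W_s$ with nonempty words $W_r$ of distinct flaws such that the sequence of their flaw sets is stable. It is $\pi$-stable if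 in addition each $W_r$ is strictly increasing in the order $\preceq_\pi$ induced by the permutation $\pi$. A walk is ($\pi$-)stable if its word is. *)

theory Defs
  imports "HOL-Probability.Probability_Mass_Function"
begin

text \<open>States have type 'a; flaws are sets of states; the transition
distributions are rho f sigma :: 'a pmf. A walk is a start state together
with the list of (flaw, next state) steps.\<close>

type_synonym 'a walk = "'a \<times> ('a set \<times> 'a) list"

definition flaws_at :: "'a set set \<Rightarrow> 'a \<Rightarrow> 'a set set" where
  "flaws_at F \<sigma> = {f \<in> F. \<sigma> \<in> f}"

definition is_step :: "'a set set \<Rightarrow> ('a set \<Rightarrow> 'a \<Rightarrow> 'a pmf) \<Rightarrow> 'a \<Rightarrow> 'a set \<Rightarrow> 'a \<Rightarrow> bool" where
  "is_step F \<rho> \<sigma> f \<sigma>' \<longleftrightarrow> f \<in> flaws_at F \<sigma> \<and> \<sigma>' \<in> set_pmf (\<rho> f \<sigma>)"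

fun steps_ok :: "'a set set \<Rightarrow> ('a set \<Rightarrow> 'a \<Rightarrow> 'a pmf) \<Rightarrow> 'a \<Rightarrow> ('a set \<times> 'a) list \<Rightarrow> bool" where
  "steps_ok F \<rho> \<sigma> [] = True"
| "steps_ok F \<rho> \<sigma> ((f, \<sigma>') # xs) = (is_step F \<rho> \<sigma> f \<sigma>' \<and> steps_ok F \<rho> \<sigma>' xs)"

definition is_walk :: "'a set \<Rightarrow> 'a set set \<Rightarrow> ('a set \<Rightarrow> 'a \<Rightarrow> 'a pmf) \<Rightarrow> 'a walk \<Rightarrow> bool" where
  "is_walk \<Omega> F \<rho> w \<longleftrightarrow> fst w \<in> \<Omega> \<and> steps_ok F \<rho> (fst w) (snd w)"

definition walk_word :: "'a walk \<Rightarrow> 'a set list" where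
  "walk_word w = map fst (snd w)"

definition walk_length :: "'a walk \<Rightarrow> nat" where
  "walk_length w = length (snd w)"

definition end_state :: "'a \<Rightarrow> ('a set \<times> 'a) list \<Rightarrow> 'a" where
  "end_state \<sigma> xs = (if xs = [] then \<sigma> else snd (last xs))"

definition last_state :: "'a walk \<Rightarrow> 'a" where
  "last_state w = end_state (fst w) (snd w)"

definition atomic :: "'a set set \<Rightarrow> ('a set \<Rightarrow> 'a \<Rightarrow> 'a pmf) \<Rightarrow> bool" where
  "atomic F \<rho> \<longleftrightarrow> (\<forall>f \<sigma>1 \<sigma>2 \<sigma>'. is_step F \<rho> \<sigma>1 f \<sigma>' \<and> is_step F \<rho> \<sigma>2 f \<sigma>' \<longrightarrow> \<sigma>1 = \<sigma>2)"

definition swappable_walks :: "'a set \<Rightarrow> 'a set set \<Rightarrow> ('a set \<Rightarrow> 'a \<Rightarrow> 'a pmf)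
    \<Rightarrow> ('a set \<Rightarrow> 'a set \<Rightarrow> bool) \<Rightarrow> 'a walk set" where
  "swappable_walks \<Omega> F \<rho> sim =
     {(\<sigma>1, [(f, \<sigma>2), (g, \<sigma>3)]) | \<sigma>1 f \<sigma>2 g \<sigma>3.
        is_walk \<Omega> F \<rho> (\<sigma>1, [(f, \<sigma>2), (g, \<sigma>3)]) \<and> \<not> sim f g}"

definition is_SWAP :: "'a set \<Rightarrow> 'a set set \<Rightarrow> ('a set \<Rightarrow> 'a \<Rightarrow> 'a pmf)
    \<Rightarrow> ('a set \<Rightarrow> 'a set \<Rightarrow> bool) \<Rightarrow> ('a walk \<Rightarrow> 'a walk) \<Rightarrow> bool" where
  "is_SWAP \<Omega> F \<rho> sim SWAP \<longleftrightarrow>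
     inj_on SWAP (swappable_walks \<Omega> F \<rho> sim) \<and>
     (\<forall>\<sigma>1 f \<sigma>2 g \<sigma>3. (\<sigma>1, [(f, \<sigma>2), (g, \<sigma>3)]) \<in> swappable_walks \<Omega> F \<rho> sim \<longrightarrow>
        (\<exists>\<sigma>2'. SWAP (\<sigma>1, [(f, \<sigma>2), (g, \<sigma>3)]) = (\<sigma>1, [(g, \<sigma>2'), (f, \<sigma>3)]) \<and>
               is_walk \<Omega> F \<rho> (\<sigma>1, [(g, \<sigma>2'), (f, \<sigma>3)])))"

definition weakly_commutative :: "'a set \<Rightarrow> 'a set set \<Rightarrow> ('a set \<Rightarrow> 'a \<Rightarrow> 'a pmf)
    \<Rightarrow> ('a set \<Rightarrow> 'a set \<Rightarrow> bool) \<Rightarrow> bool" where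
  "weakly_commutative \<Omega> F \<rho> sim \<longleftrightarrow> (\<exists>SWAP. is_SWAP \<Omega> F \<rho> sim SWAP)"

definition flaw_cong :: "('a set \<Rightarrow> 'a set \<Rightarrow> bool) \<Rightarrow> 'a set \<Rightarrow> 'a set \<Rightarrow> bool" where
  "flaw_cong sim f g \<longleftrightarrow> sim f g \<or> f = g"

definition valid_swap :: "('a set \<Rightarrow> 'a set \<Rightarrow> bool) \<Rightarrow> ('a walk \<Rightarrow> 'a walk) \<Rightarrow> 'a walk \<Rightarrow> 'a walk \<Rightarrow> bool" where
  "valid_swap sim SWAP w w' \<longleftrightarrow>
     (\<exists>xs f \<sigma>2 g \<sigma>3 ys. snd w = xs @ [(f, \<sigma>2), (g, \<sigma>3)] @ ys \<and> \<not> flaw_cong sim f g \<and>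
        w' = (fst w, xs @ snd (SWAP (end_state (fst w) xs, [(f, \<sigma>2), (g, \<sigma>3)])) @ ys))"

definition swapping_mapping :: "('a set \<Rightarrow> 'a set \<Rightarrow> bool) \<Rightarrow> ('a walk \<Rightarrow> 'a walk)
    \<Rightarrow> 'a walk set \<Rightarrow> ('a walk \<Rightarrow> 'a walk) \<Rightarrow> bool" where
  "swapping_mapping sim SWAP W \<Phi> \<longleftrightarrow> (\<forall>w\<in>W. (valid_swap sim SWAP)\<^sup>*\<^sup>* w (\<Phi> w))"

definition is_strategy :: "'a set \<Rightarrow> 'a set set \<Rightarrow> ('a set \<Rightarrow> 'a \<Rightarrow> 'a pmf) \<Rightarrow> ('a walk \<Rightarrow> 'a set) \<Rightarrow> bool" where
  "is_strategy \<Omega> F \<rho> \<Lambda> \<longleftrightarrow>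
     (\<forall>w. is_walk \<Omega> F \<rho> w \<and> flaws_at F (last_state w) \<noteq> {} \<longrightarrow> \<Lambda> w \<in> flaws_at F (last_state w))"

definition follows :: "('a walk \<Rightarrow> 'a set) \<Rightarrow> 'a walk \<Rightarrow> bool" where
  "follows \<Lambda> w \<longleftrightarrow> (\<forall>i < length (snd w). fst (snd w ! i) = \<Lambda> (fst w, take i (snd w)))"

definition Bad :: "'a set \<Rightarrow> 'a set set \<Rightarrow> ('a set \<Rightarrow> 'a \<Rightarrow> 'a pmf) \<Rightarrow> 'a pmf
    \<Rightarrow> ('a walk \<Rightarrow> 'a set) \<Rightarrow> nat \<Rightarrow> 'a walk set" where
  "Bad \<Omega> F \<rho> \<omega> \<Lambda> t = {w. is_walk \<Omega> F \<rho> w \<and> walk_length w = t \<and> pmf \<omega> (fst w) > 0 \<and> follows \<Lambda> w}"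

definition Gamma :: "'a set set \<Rightarrow> ('a set \<Rightarrow> 'a set \<Rightarrow> bool) \<Rightarrow> 'a set \<Rightarrow> 'a set set" where
  "Gamma F sim f = {g \<in> F. sim f g}"

definition Gamma_plus :: "'a set set \<Rightarrow> ('a set \<Rightarrow> 'a set \<Rightarrow> bool) \<Rightarrow> 'a set set \<Rightarrow> 'a set set" where
  "Gamma_plus F sim S = (\<Union>f\<in>S. insert f (Gamma F sim f))"

definition Ind :: "'a set set \<Rightarrow> ('a set \<Rightarrow> 'a set \<Rightarrow> bool) \<Rightarrow> 'a set set set" where
  "Ind F sim = {S. S \<subseteq> F \<and> (\<forall>f\<in>S. \<forall>g\<in>S. f \<noteq> g \<longrightarrow> \<not> sim f g)}"

definition stable_seq :: "'a set set \<Rightarrow> ('a set \<Rightarrow> 'a set \<Rightarrow> bool) \<Rightarrow> 'a set set list \<Rightarrow> bool" where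
  "stable_seq F sim Is \<longleftrightarrow> Is \<noteq> [] \<and> (\<forall>I\<in>set Is. I \<in> Ind F sim) \<and>
     (\<forall>r. Suc r < length Is \<longrightarrow> Is ! Suc r \<subseteq> Gamma_plus F sim (Is ! r))"

definition stable_word :: "'a set set \<Rightarrow> ('a set \<Rightarrow> 'a set \<Rightarrow> bool) \<Rightarrow> 'a set list \<Rightarrow> bool" where
  "stable_word F sim W \<longleftrightarrow> (\<exists>Ws. W = concat Ws \<and> (\<forall>V\<in>set Ws. V \<noteq> [] \<and> distinct V) \<and>
      stable_seq F sim (map set Ws))"

text \<open>pi : F -> {0..<card F} a bijection; f precedes g iff pi f <= pi g.\<close>
definition pi_stable_word :: "'a set set \<Rightarrow> ('a set \<Rightarrow> 'a set \<Rightarrow> bool) \<Rightarrow> ('a set \<Rightarrow> nat) \<Rightarrow> 'a set list \<Rightarrow> bool" where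
  "pi_stable_word F sim \<pi> W \<longleftrightarrow> (\<exists>Ws. W = concat Ws \<and> (\<forall>V\<in>set Ws. V \<noteq> [] \<and> distinct V) \<and>
      stable_seq F sim (map set Ws) \<and> (\<forall>V\<in>set Ws. sorted_wrt (\<lambda>f g. \<pi> f < \<pi> g) V))"

definition pi_stable_walk :: "'a set set \<Rightarrow> ('a set \<Rightarrow> 'a set \<Rightarrow> bool) \<Rightarrow> ('a set \<Rightarrow> nat) \<Rightarrow> 'a walk \<Rightarrow> bool" where
  "pi_stable_walk F sim \<pi> w \<longleftrightarrow> pi_stable_word F sim \<pi> (walk_word w)"

end

theory Submission
  imports Defs
begin

text \<open>Swapping adjacent non-congruent flaws is an equivalence on words, and each class contains
  a \<open>\<pi>\<close>-stable word, its Foata normal form: the first layer consists of the flaws congruent to no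
  earlier flaw, sorted by \<open>\<pi>\<close>, followed by the normal form of the remaining word; every flaw of a
  later layer is congruent to one of the layer before it. Weak commutativity lifts each swap of
  words to a valid swap of walks fixing both end states, so every walk of \<open>Bad(t)\<close> is swapped into a
  \<open>\<pi>\<close>-stable walk. This map is injective: two walks following \<open>\<Lambda>\<close> from the same start, with
  equivalent words and the same final state, take the same first flaw; cancelling it keeps the
  words equivalent, and lifting that equivalence together with atomicity forces the same second
  state, so induction applies.\<close>

section \<open>Swap equivalence of words\<close>

definition swap_step :: "'a set set \<Rightarrow> ('a set \<Rightarrow> 'a set \<Rightarrow> bool) \<Rightarrow> 'a set list \<Rightarrow> 'a set list \<Rightarrow> bool" where
  "swap_step F sim W W' \<longleftrightarrow> (\<exists>xs a b ys. W = xs @ [a, b] @ ys \<and> a \<in> F \<and> b \<in> F \<and>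
      \<not> flaw_cong sim a b \<and> W' = xs @ [b, a] @ ys)"

abbreviation swap_equiv :: "'a set set \<Rightarrow> ('a set \<Rightarrow> 'a set \<Rightarrow> bool) \<Rightarrow> 'a set list \<Rightarrow> 'a set list \<Rightarrow> bool" where
  "swap_equiv F sim \<equiv> (swap_step F sim)\<^sup>*\<^sup>*"

lemma swap_step_Cons_Cons:
  "a \<in> F \<Longrightarrow> b \<in> F \<Longrightarrow> \<not> flaw_cong sim a b \<Longrightarrow> swap_step F sim (a # b # ys) (b # a # ys)"
  unfolding swap_step_def by (intro exI[of _ "[]"]) auto

lemma swap_step_append_both:
  assumes "swap_step F sim A B"
  shows "swap_step F sim (xs @ A @ ys) (xs @ B @ ys)"
proof -
  from assms obtain as a b bs where "A = as @ [a, b] @ bs" "B = as @ [b, a] @ bs"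
    "a \<in> F" "b \<in> F" "\<not> flaw_cong sim a b"
    unfolding swap_step_def by blast
  then show ?thesis
    unfolding swap_step_def by (intro exI[of _ "xs @ as"] exI[of _ "bs @ ys"]) auto
qed

lemma swap_equiv_append_both:
  "swap_equiv F sim A B \<Longrightarrow> swap_equiv F sim (xs @ A @ ys) (xs @ B @ ys)"
  by (induction rule: rtranclp_induct) (auto intro: rtranclp.rtrancl_into_rtrancl swap_step_append_both)

lemma swap_equiv_Cons: "swap_equiv F sim A B \<Longrightarrow> swap_equiv F sim (x # A) (x # B)"
  using swap_equiv_append_both[of F sim A B "[x]" "[]"] by simp

lemma swap_equiv_append_left: "swap_equiv F sim A B \<Longrightarrow> swap_equiv F sim (xs @ A) (xs @ B)"
  using swap_equiv_append_both[of F sim A B xs "[]"] by simp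

lemma swap_equiv_append_right: "swap_equiv F sim A B \<Longrightarrow> swap_equiv F sim (A @ ys) (B @ ys)"
  using swap_equiv_append_both[of F sim A B "[]" ys] by simp

lemma swap_equiv_length: "swap_equiv F sim A B \<Longrightarrow> length A = length B"
  by (induction rule: rtranclp_induct) (auto simp: swap_step_def)

lemma swap_equiv_sym:
  assumes sym: "\<forall>f\<in>F. \<forall>g\<in>F. sim f g \<longrightarrow> sim g f" and "swap_equiv F sim A B"
  shows "swap_equiv F sim B A"
proof -
  have "swap_step F sim B A" if "swap_step F sim A B" for A B
    using that sym unfolding swap_step_def flaw_cong_def by blast
  with assms(2) show ?thesis
    by (induction rule: rtranclp_induct) (auto intro: converse_rtranclp_into_rtranclp)
qed

lemma swap_step_remove1:
  assumes "swap_step F sim A B"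
  shows "swap_equiv F sim (remove1 f A) (remove1 f B)"
proof -
  from assms obtain xs a b ys where A: "A = xs @ [a, b] @ ys" and B: "B = xs @ [b, a] @ ys"
    and ab: "a \<in> F" "b \<in> F" "\<not> flaw_cong sim a b"
    unfolding swap_step_def by blast
  have "a \<noteq> b" using ab(3) unfolding flaw_cong_def by auto
  consider "f \<in> set xs" | "f \<notin> set xs" "f \<noteq> a" "f \<noteq> b" | "f \<notin> set xs" "f = a \<or> f = b"
    by blast
  then show ?thesis
  proof cases
    case 1
    then have "swap_step F sim (remove1 f A) (remove1 f B)"
      using ab unfolding A B swap_step_def by (auto simp: remove1_append)
    then show ?thesis by blast
  next
    case 2
    then have "swap_step F sim (remove1 f A) (remove1 f B)"
      using ab unfolding A B swap_step_def by (auto simp: remove1_append intro!: exI[of _ xs])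
    then show ?thesis by blast
  next
    case 3
    then show ?thesis using \<open>a \<noteq> b\<close> unfolding A B by (auto simp: remove1_append)
  qed
qed

lemma swap_equiv_Cons_cancel: "swap_equiv F sim (f # A) (f # B) \<Longrightarrow> swap_equiv F sim A B"
proof -
  have "swap_equiv F sim (remove1 f A) (remove1 f B)" if "swap_equiv F sim A B" for A B
    using that by (induction rule: rtranclp_induct) (auto dest: swap_step_remove1[of _ _ _ _ f])
  then show "swap_equiv F sim (f # A) (f # B) \<Longrightarrow> swap_equiv F sim A B"
    by fastforce
qed

lemma swap_equiv_move_right:
  assumes "x \<in> F" "\<forall>l\<in>set L. l \<in> F \<and> \<not> flaw_cong sim x l"
  shows "swap_equiv F sim (x # L @ R) (L @ x # R)"
  using assms(2)
proof (induction L)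
  case (Cons l L)
  then have "swap_step F sim (x # l # L @ R) (l # x # L @ R)"
    using assms(1) by (intro swap_step_Cons_Cons) auto
  moreover have "swap_equiv F sim (l # x # L @ R) (l # L @ x # R)"
    using Cons by (auto intro: swap_equiv_Cons)
  ultimately show ?case by (auto intro: converse_rtranclp_into_rtranclp)
qed simp

lemma swap_equiv_insort_key:
  assumes "x \<in> F" "\<forall>y\<in>set L. y \<in> F \<and> \<not> flaw_cong sim x y"
  shows "swap_equiv F sim (x # L) (insort_key \<pi> x L)"
  using assms(2)
proof (induction L)
  case (Cons y L)
  show ?case
  proof (cases "\<pi> x \<le> \<pi> y")
    case False
    have "swap_step F sim (x # y # L) (y # x # L)"
      using assms(1) Cons.prems by (intro swap_step_Cons_Cons) auto
    moreover have "swap_equiv F sim (y # x # L) (y # insort_key \<pi> x L)"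
      using Cons by (auto intro: swap_equiv_Cons)
    ultimately show ?thesis using False by (auto intro: converse_rtranclp_into_rtranclp)
  qed simp
qed simp

lemma swap_equiv_sort_key:
  assumes "sorted_wrt (\<lambda>a b. \<not> flaw_cong sim a b) L" "set L \<subseteq> F"
  shows "swap_equiv F sim L (sort_key \<pi> L)"
  using assms
proof (induction L)
  case (Cons x L)
  then have "swap_equiv F sim (x # L) (x # sort_key \<pi> L)"
    by (auto intro: swap_equiv_Cons)
  moreover have "swap_equiv F sim (x # sort_key \<pi> L) (insort_key \<pi> x (sort_key \<pi> L))"
    using Cons.prems by (intro swap_equiv_insort_key) auto
  ultimately show ?case by simp
qed simp

lemma sorted_wrt_not_cong_distinct: "sorted_wrt (\<lambda>a b. \<not> flaw_cong sim a b) L \<Longrightarrow> distinct L"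
  by (induction L) (auto simp: flaw_cong_def)

lemma sorted_wrt_not_cong_Ind:
  assumes sym: "\<forall>f\<in>F. \<forall>g\<in>F. sim f g \<longrightarrow> sim g f"
    and "sorted_wrt (\<lambda>a b. \<not> flaw_cong sim a b) L" "set L \<subseteq> F"
  shows "set L \<in> Ind F sim"
  using assms(2,3) unfolding Ind_def
proof (induction L)
  case (Cons x L)
  then show ?case using sym unfolding flaw_cong_def by (simp, metis subset_iff)
qed simp

section \<open>Foata normal form\<close>

text \<open>\<open>split_layer sim S W\<close> scans \<open>W\<close> after the flaws \<open>S\<close> and separates the flaws congruent to no
  earlier one (the first Foata layer) from the rest, keeping the relative order of both.\<close>
fun split_layer :: "('a set \<Rightarrow> 'a set \<Rightarrow> bool) \<Rightarrow> 'a set set \<Rightarrow> 'a set list \<Rightarrow> 'a set list \<times> 'a set list" where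
  "split_layer sim S [] = ([], [])"
| "split_layer sim S (x # xs) = (let p = split_layer sim (insert x S) xs in
     if \<forall>y\<in>S. \<not> flaw_cong sim y x then (x # fst p, snd p) else (fst p, x # snd p))"

lemma split_layer_length:
  "length (fst (split_layer sim S W)) + length (snd (split_layer sim S W)) = length W"
  by (induction W arbitrary: S) (auto simp: Let_def)

lemma split_layer_set: "set (fst (split_layer sim S W)) \<union> set (snd (split_layer sim S W)) = set W"
  by (induction W arbitrary: S) (auto simp: Let_def)

lemma split_layer_fst_not_cong:
  "l \<in> set (fst (split_layer sim S W)) \<Longrightarrow> y \<in> S \<Longrightarrow> \<not> flaw_cong sim y l"
  by (induction W arbitrary: S) (auto simp: Let_def split: if_splits)

lemma split_layer_fst_sorted: "sorted_wrt (\<lambda>a b. \<not> flaw_cong sim a b) (fst (split_layer sim S W))"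
  by (induction W arbitrary: S) (auto simp: Let_def dest: split_layer_fst_not_cong)

lemma split_layer_fst_nonempty: "W \<noteq> [] \<Longrightarrow> fst (split_layer sim {} W) \<noteq> []"
  by (cases W) (auto simp: Let_def)

lemma swap_equiv_split_layer:
  "set W \<subseteq> F \<Longrightarrow> swap_equiv F sim W (fst (split_layer sim S W) @ snd (split_layer sim S W))"
proof (induction W arbitrary: S)
  case (Cons x W)
  let ?p = "split_layer sim (insert x S) W"
  have "swap_equiv F sim (x # W) (x # fst ?p @ snd ?p)"
    using Cons by (auto intro: swap_equiv_Cons)
  moreover have "swap_equiv F sim (x # fst ?p @ snd ?p) (fst ?p @ x # snd ?p)"
    using Cons.prems split_layer_set[of sim "insert x S" W]
    by (intro swap_equiv_move_right) (auto dest: split_layer_fst_not_cong)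
  ultimately show ?case by (auto simp: Let_def intro: rtranclp_trans)
qed simp

text \<open>For \<open>T = S = {}\<close>: every flaw of the second layer is congruent to one of the first. The
  set \<open>T\<close> generalises the statement for the induction.\<close>
lemma split_layer_second_layer_cong:
  "T \<subseteq> S \<Longrightarrow> x \<in> set (fst (split_layer sim T (snd (split_layer sim S W)))) \<Longrightarrow>
     (\<exists>y\<in>S - T. flaw_cong sim y x) \<or> (\<exists>y\<in>set (fst (split_layer sim S W)). flaw_cong sim y x)"
proof (induction W arbitrary: S T)
  case (Cons w W)
  let ?p = "split_layer sim (insert w S) W"
  show ?case
  proof (cases "\<forall>y\<in>S. \<not> flaw_cong sim y w")
    case True
    then show ?thesis
      using Cons.IH[of T "insert w S"] Cons.prems by (auto simp: Let_def)
  next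
    case False
    then have "x \<in> set (fst (split_layer sim T (w # snd ?p)))"
      using Cons.prems(2) False by (auto simp: Let_def)
    then consider "x = w" "\<forall>y\<in>T. \<not> flaw_cong sim y w" | "x \<in> set (fst (split_layer sim (insert w T) (snd ?p)))"
      by (auto simp: Let_def split: if_splits)
    then show ?thesis
      using Cons.IH[of "insert w T" "insert w S"] Cons.prems False by cases (auto simp: Let_def)
  qed
qed simp

lemma split_layer_snd_shorter: "W \<noteq> [] \<Longrightarrow> length (snd (split_layer sim {} W)) < length W"
  using split_layer_length[of sim "{}" W] split_layer_fst_nonempty[of W sim]
  by (cases "fst (split_layer sim {} W)") auto

function foata_layers :: "('a set \<Rightarrow> 'a set \<Rightarrow> bool) \<Rightarrow> ('a set \<Rightarrow> nat) \<Rightarrow> 'a set list \<Rightarrow> 'a set list list" where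
  "foata_layers sim \<pi> W = (if W = [] then [] else
     sort_key \<pi> (fst (split_layer sim {} W)) # foata_layers sim \<pi> (snd (split_layer sim {} W)))"
  by auto
termination
  by (relation "Wellfounded.measure (\<lambda>(sim, \<pi>, W). length W)") (auto simp: split_layer_snd_shorter)

declare foata_layers.simps [simp del]

lemma foata_layers_Nil [simp]: "foata_layers sim \<pi> [] = []"
  by (simp add: foata_layers.simps)

lemma foata_layers_nonempty:
  "W \<noteq> [] \<Longrightarrow> foata_layers sim \<pi> W =
     sort_key \<pi> (fst (split_layer sim {} W)) # foata_layers sim \<pi> (snd (split_layer sim {} W))"
  by (simp add: foata_layers.simps)

lemma swap_equiv_foata_layers:
  "set W \<subseteq> F \<Longrightarrow> swap_equiv F sim W (concat (foata_layers sim \<pi> W))"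
proof (induction sim \<pi> W rule: foata_layers.induct)
  case (1 sim \<pi> W)
  show ?case
  proof (cases "W = []")
    case False
    let ?L = "fst (split_layer sim {} W)" and ?R = "snd (split_layer sim {} W)"
    have LR: "set ?L \<subseteq> F" "set ?R \<subseteq> F"
      using "1.prems" split_layer_set[of sim "{}" W] by auto
    have "swap_equiv F sim W (?L @ ?R)"
      using "1.prems" by (rule swap_equiv_split_layer)
    moreover have "swap_equiv F sim (?L @ ?R) (sort_key \<pi> ?L @ ?R)"
      using swap_equiv_sort_key[OF split_layer_fst_sorted LR(1)] by (rule swap_equiv_append_right)
    moreover have "swap_equiv F sim (sort_key \<pi> ?L @ ?R) (sort_key \<pi> ?L @ concat (foata_layers sim \<pi> ?R))"
      using "1.IH"[OF False LR(2)] by (rule swap_equiv_append_left)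
    ultimately show ?thesis
      using False by (simp add: foata_layers_nonempty)
  qed simp
qed

lemma sorted_wrt_less_sort_key:
  assumes "inj_on \<pi> (set L)" "distinct L"
  shows "sorted_wrt (\<lambda>f g. \<pi> f < \<pi> g) (sort_key \<pi> L)"
proof -
  have "distinct (map \<pi> (sort_key \<pi> L))"
    using assms by (simp add: distinct_map)
  then have "sorted_wrt (<) (map \<pi> (sort_key \<pi> L))"
    by (simp add: strict_sorted_iff del: sorted_map)
  then show ?thesis by (simp add: sorted_wrt_map)
qed

lemma foata_layer_Ind_sorted:
  assumes sym: "\<forall>f\<in>F. \<forall>g\<in>F. sim f g \<longrightarrow> sim g f" and inj: "inj_on \<pi> F"
  shows "V \<in> set (foata_layers sim \<pi> W) \<Longrightarrow> set W \<subseteq> F \<Longrightarrow>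
    V \<noteq> [] \<and> distinct V \<and> set V \<in> Ind F sim \<and> sorted_wrt (\<lambda>f g. \<pi> f < \<pi> g) V"
proof (induction W rule: measure_induct_rule[of length])
  case (less W)
  let ?L = "fst (split_layer sim {} W)" and ?R = "snd (split_layer sim {} W)"
  show ?case
  proof (cases "W = []")
    case False
    have LR: "set ?L \<subseteq> F" "set ?R \<subseteq> F"
      using less.prems split_layer_set[of sim "{}" W] by auto
    have "distinct ?L" and "set ?L \<in> Ind F sim"
      using split_layer_fst_sorted sorted_wrt_not_cong_distinct sorted_wrt_not_cong_Ind[OF sym _ LR(1)]
      by blast+
    moreover have "inj_on \<pi> (set ?L)" using inj LR(1) by (rule inj_on_subset)
    moreover have "sort_key \<pi> ?L \<noteq> []"
      using split_layer_fst_nonempty[OF False] by (metis length_0_conv length_sort)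
    ultimately show ?thesis
      using less.IH[OF split_layer_snd_shorter[OF False] _ LR(2)] less.prems(1) False
      by (auto simp: foata_layers_nonempty sorted_wrt_less_sort_key)
  qed (use less.prems in simp)
qed

lemma foata_layers_stable:
  "Suc r < length (foata_layers sim \<pi> W) \<Longrightarrow> set W \<subseteq> F \<Longrightarrow>
    set (foata_layers sim \<pi> W ! Suc r) \<subseteq> Gamma_plus F sim (set (foata_layers sim \<pi> W ! r))"
proof (induction W arbitrary: r rule: measure_induct_rule[of length])
  case (less W)
  let ?L = "fst (split_layer sim {} W)" and ?R = "snd (split_layer sim {} W)"
  have W: "W \<noteq> []"
    using less.prems(1) by auto
  then have R: "?R \<noteq> []"
    using less.prems(1) by (auto simp: foata_layers_nonempty)
  have RF: "set ?R \<subseteq> F"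
    using less.prems(2) split_layer_set[of sim "{}" W] by auto
  show ?case
  proof (cases r)
    case 0
    have "x \<in> Gamma_plus F sim (set ?L)" if x: "x \<in> set (fst (split_layer sim {} ?R))" for x
    proof -
      obtain y where "y \<in> set ?L" "flaw_cong sim y x"
        using split_layer_second_layer_cong[OF _ x] by auto
      moreover have "x \<in> F" using x RF split_layer_set[of sim "{}" ?R] by auto
      ultimately show ?thesis unfolding Gamma_plus_def Gamma_def flaw_cong_def by auto
    qed
    then show ?thesis using 0 W R by (auto simp: foata_layers_nonempty)
  next
    case (Suc r')
    then show ?thesis
      using less.IH[OF split_layer_snd_shorter[OF W], of r'] less.prems(1) W RF
      by (simp add: foata_layers_nonempty)
  qed
qed

lemma pi_stable_word_foata_layers:
  assumes sym: "\<forall>f\<in>F. \<forall>g\<in>F. sim f g \<longrightarrow> sim g f" and inj: "inj_on \<pi> F"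
    and "W \<noteq> []" "set W \<subseteq> F"
  shows "pi_stable_word F sim \<pi> (concat (foata_layers sim \<pi> W))"
proof -
  let ?Ls = "foata_layers sim \<pi> W"
  have "?Ls \<noteq> []"
    using assms(3) by (simp add: foata_layers_nonempty)
  then have "stable_seq F sim (map set ?Ls)"
    unfolding stable_seq_def
    using foata_layer_Ind_sorted[OF sym inj _ assms(4)] foata_layers_stable[OF _ assms(4)] by auto
  then show ?thesis
    unfolding pi_stable_word_def using foata_layer_Ind_sorted[OF sym inj _ assms(4)] by blast
qed

section \<open>Lifting swaps to walks\<close>

lemma end_state_Nil [simp]: "end_state s [] = s"
  by (simp add: end_state_def)

lemma end_state_Cons [simp]: "end_state s ((f, \<tau>) # xs) = end_state \<tau> xs"
  by (simp add: end_state_def)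

lemma end_state_append: "end_state s (xs @ ys) = end_state (end_state s xs) ys"
  by (induction xs arbitrary: s) auto

lemma steps_ok_append:
  "steps_ok F \<rho> s (xs @ ys) \<longleftrightarrow> steps_ok F \<rho> s xs \<and> steps_ok F \<rho> (end_state s xs) ys"
  by (induction xs arbitrary: s) auto

lemma steps_ok_flaws: "steps_ok F \<rho> s xs \<Longrightarrow> set (map fst xs) \<subseteq> F"
  by (induction xs arbitrary: s) (fastforce simp: is_step_def flaws_at_def)+

lemma end_state_in_Omega:
  assumes supp: "\<forall>\<sigma>\<in>\<Omega>. \<forall>f\<in>flaws_at F \<sigma>. set_pmf (\<rho> f \<sigma>) \<subseteq> \<Omega>"
  shows "s \<in> \<Omega> \<Longrightarrow> steps_ok F \<rho> s xs \<Longrightarrow> end_state s xs \<in> \<Omega>"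
  by (induction xs arbitrary: s) (use supp in \<open>fastforce simp: is_step_def\<close>)+

lemma valid_swap_lift_swap_step:
  assumes supp: "\<forall>\<sigma>\<in>\<Omega>. \<forall>f\<in>flaws_at F \<sigma>. set_pmf (\<rho> f \<sigma>) \<subseteq> \<Omega>"
    and swap: "is_SWAP \<Omega> F \<rho> sim SWAP"
    and s: "s \<in> \<Omega>" and ok: "steps_ok F \<rho> s xs" and W: "swap_step F sim (map fst xs) V"
  shows "\<exists>xs'. valid_swap sim SWAP (s, xs) (s, xs') \<and> map fst xs' = V \<and>
     steps_ok F \<rho> s xs' \<and> end_state s xs' = end_state s xs"
proof -
  from W obtain as a b bs where y: "map fst xs = as @ [a, b] @ bs" and ab: "\<not> flaw_cong sim a b"
    and V: "V = as @ [b, a] @ bs"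
    unfolding swap_step_def by blast
  then obtain ps \<sigma>2 \<sigma>3 qs where xs: "xs = ps @ [(a, \<sigma>2), (b, \<sigma>3)] @ qs"
    and ps: "map fst ps = as" and qs: "map fst qs = bs"
    by (auto simp: map_eq_append_conv Cons_eq_map_conv)
  define e where "e = end_state s ps"
  have okp: "steps_ok F \<rho> s ps" and ok2: "steps_ok F \<rho> e [(a, \<sigma>2), (b, \<sigma>3)]"
    and okq: "steps_ok F \<rho> \<sigma>3 qs"
    using ok unfolding xs e_def by (auto simp: steps_ok_append)
  have "(e, [(a, \<sigma>2), (b, \<sigma>3)]) \<in> swappable_walks \<Omega> F \<rho> sim"
    unfolding swappable_walks_def is_walk_def
    using end_state_in_Omega[OF supp s okp] ok2 ab unfolding e_def flaw_cong_def by auto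
  then obtain \<sigma>2' where S: "SWAP (e, [(a, \<sigma>2), (b, \<sigma>3)]) = (e, [(b, \<sigma>2'), (a, \<sigma>3)])"
    and okS: "is_walk \<Omega> F \<rho> (e, [(b, \<sigma>2'), (a, \<sigma>3)])"
    using swap unfolding is_SWAP_def by blast
  define xs' where "xs' = ps @ [(b, \<sigma>2'), (a, \<sigma>3)] @ qs"
  have "valid_swap sim SWAP (s, xs) (s, xs')"
    unfolding valid_swap_def xs'_def using xs ab S unfolding e_def by fastforce
  moreover have "steps_ok F \<rho> s xs'"
    using okp okS okq unfolding xs'_def is_walk_def e_def by (simp add: steps_ok_append)
  moreover have "end_state s xs' = end_state s xs"
    unfolding xs'_def xs by (simp add: end_state_append)
  ultimately show ?thesis
    using ps qs V unfolding xs'_def by auto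
qed

lemma valid_swap_lift_swap_equiv:
  assumes supp: "\<forall>\<sigma>\<in>\<Omega>. \<forall>f\<in>flaws_at F \<sigma>. set_pmf (\<rho> f \<sigma>) \<subseteq> \<Omega>"
    and swap: "is_SWAP \<Omega> F \<rho> sim SWAP"
    and s: "s \<in> \<Omega>" and ok: "steps_ok F \<rho> s xs" and W: "swap_equiv F sim (map fst xs) V"
  shows "\<exists>xs'. (valid_swap sim SWAP)\<^sup>*\<^sup>* (s, xs) (s, xs') \<and> map fst xs' = V \<and>
     steps_ok F \<rho> s xs' \<and> end_state s xs' = end_state s xs"
  using W
proof (induction rule: rtranclp_induct)
  case (step V V')
  then obtain xs' where "(valid_swap sim SWAP)\<^sup>*\<^sup>* (s, xs) (s, xs')" "map fst xs' = V"
     "steps_ok F \<rho> s xs'" "end_state s xs' = end_state s xs"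
    by blast
  with valid_swap_lift_swap_step[OF supp swap s, of xs' V'] step(2) show ?case
    by (metis rtranclp.rtrancl_into_rtrancl)
qed (use ok in auto)

lemma atomic_steps_unique:
  assumes atom: "atomic F \<rho>"
  shows "steps_ok F \<rho> s1 xs1 \<Longrightarrow> steps_ok F \<rho> s2 xs2 \<Longrightarrow> map fst xs1 = map fst xs2 \<Longrightarrow>
    end_state s1 xs1 = end_state s2 xs2 \<Longrightarrow> s1 = s2 \<and> xs1 = xs2"
proof (induction xs1 arbitrary: s1 s2 xs2)
  case (Cons x xs1)
  obtain f a where x: "x = (f, a)" by (cases x)
  obtain b ys where xs2: "xs2 = (f, b) # ys" using Cons.prems(3) x by (cases xs2) auto
  have "a = b \<and> xs1 = ys" using Cons.IH[of a b ys] Cons.prems x xs2 by simp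
  moreover have "is_step F \<rho> s1 f a" "is_step F \<rho> s2 f b" using Cons.prems x xs2 by auto
  ultimately show ?case using atom x xs2 unfolding atomic_def by blast
qed simp

section \<open>Walks following a strategy\<close>

definition follows_after :: "('a walk \<Rightarrow> 'a set) \<Rightarrow> 'a \<Rightarrow> ('a set \<times> 'a) list \<Rightarrow> ('a set \<times> 'a) list \<Rightarrow> bool" where
  "follows_after \<Lambda> \<sigma>0 p xs \<longleftrightarrow> (\<forall>i < length xs. fst (xs ! i) = \<Lambda> (\<sigma>0, p @ take i xs))"

lemma follows_iff_follows_after: "follows \<Lambda> w \<longleftrightarrow> follows_after \<Lambda> (fst w) [] (snd w)"
  by (simp add: follows_def follows_after_def)

lemma follows_after_Cons:
  "follows_after \<Lambda> \<sigma>0 p ((f, \<tau>) # xs) \<longleftrightarrow> f = \<Lambda> (\<sigma>0, p) \<and> follows_after \<Lambda> \<sigma>0 (p @ [(f, \<tau>)]) xs"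
  unfolding follows_after_def by (simp add: All_less_Suc2)

lemma follows_after_steps_unique:
  assumes atom: "atomic F \<rho>"
    and supp: "\<forall>\<sigma>\<in>\<Omega>. \<forall>f\<in>flaws_at F \<sigma>. set_pmf (\<rho> f \<sigma>) \<subseteq> \<Omega>"
    and swap: "is_SWAP \<Omega> F \<rho> sim SWAP"
  shows "follows_after \<Lambda> \<sigma>0 p xs1 \<Longrightarrow> follows_after \<Lambda> \<sigma>0 p xs2 \<Longrightarrow> s \<in> \<Omega> \<Longrightarrow>
    steps_ok F \<rho> s xs1 \<Longrightarrow> steps_ok F \<rho> s xs2 \<Longrightarrow>
    swap_equiv F sim (map fst xs1) (map fst xs2) \<Longrightarrow> end_state s xs1 = end_state s xs2 \<Longrightarrow> xs1 = xs2"
proof (induction xs1 arbitrary: p s xs2)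
  case Nil
  then show ?case using swap_equiv_length by fastforce
next
  case (Cons x ys1)
  obtain f \<tau>1 where x: "x = (f, \<tau>1)" by (cases x)
  obtain g \<tau>2 ys2 where xs2: "xs2 = (g, \<tau>2) # ys2"
    using swap_equiv_length[OF Cons.prems(6)] by (cases xs2) auto
  have g: "g = f"
    using Cons.prems(1,2) unfolding x xs2 by (simp add: follows_after_Cons)
  have equiv: "swap_equiv F sim (map fst ys1) (map fst ys2)"
    using Cons.prems(6) swap_equiv_Cons_cancel unfolding x xs2 g by fastforce
  have \<tau>1: "\<tau>1 \<in> \<Omega>" and ok1: "steps_ok F \<rho> \<tau>1 ys1" and ok2: "steps_ok F \<rho> \<tau>2 ys2"
    using Cons.prems(3-5) supp unfolding x xs2 by (auto simp: is_step_def)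
  obtain zs where "map fst zs = map fst ys2" "steps_ok F \<rho> \<tau>1 zs" "end_state \<tau>1 zs = end_state \<tau>2 ys2"
    using valid_swap_lift_swap_equiv[OF supp swap \<tau>1 ok1 equiv] Cons.prems(7) unfolding x xs2 by auto
  then have \<tau>: "\<tau>2 = \<tau>1"
    using atomic_steps_unique[OF atom _ ok2] by metis
  have "follows_after \<Lambda> \<sigma>0 (p @ [(f, \<tau>1)]) ys1" "follows_after \<Lambda> \<sigma>0 (p @ [(f, \<tau>1)]) ys2"
    using Cons.prems(1,2) unfolding x xs2 g \<tau> by (auto simp: follows_after_Cons)
  moreover have "end_state \<tau>1 ys1 = end_state \<tau>1 ys2"
    using Cons.prems(7) unfolding x xs2 \<tau> by simp
  ultimately have "ys1 = ys2"
    using Cons.IH \<tau>1 ok1 ok2 equiv unfolding \<tau> by blast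
  then show ?case unfolding x xs2 g \<tau> by simp
qed

lemma Bad_eqI:
  assumes atom: "atomic F \<rho>"
    and supp: "\<forall>\<sigma>\<in>\<Omega>. \<forall>f\<in>flaws_at F \<sigma>. set_pmf (\<rho> f \<sigma>) \<subseteq> \<Omega>"
    and swap: "is_SWAP \<Omega> F \<rho> sim SWAP"
    and w1: "w1 \<in> Bad \<Omega> F \<rho> \<omega> \<Lambda> t" and w2: "w2 \<in> Bad \<Omega> F \<rho> \<omega> \<Lambda> t"
    and "fst w1 = fst w2" "swap_equiv F sim (walk_word w1) (walk_word w2)"
    and "last_state w1 = last_state w2"
  shows "w1 = w2"
proof -
  have "snd w1 = snd w2"
    using follows_after_steps_unique[OF atom supp swap] w1 w2 assms(6-8)
    unfolding Bad_def is_walk_def follows_iff_follows_after walk_word_def last_state_def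
    by (metis (no_types, lifting) mem_Collect_eq)
  then show ?thesis using assms(6) by (simp add: prod_eq_iff)
qed

lemma walk_valid_swaps_to_foata_layers:
  assumes supp: "\<forall>\<sigma>\<in>\<Omega>. \<forall>f\<in>flaws_at F \<sigma>. set_pmf (\<rho> f \<sigma>) \<subseteq> \<Omega>"
    and swap: "is_SWAP \<Omega> F \<rho> sim SWAP"
    and w: "is_walk \<Omega> F \<rho> w"
  shows "\<exists>xs. (valid_swap sim SWAP)\<^sup>*\<^sup>* w (fst w, xs) \<and>
    map fst xs = concat (foata_layers sim \<pi> (walk_word w)) \<and> end_state (fst w) xs = last_state w"
proof -
  have "fst w \<in> \<Omega>" and ok: "steps_ok F \<rho> (fst w) (snd w)"
    using w by (auto simp: is_walk_def)
  moreover have "swap_equiv F sim (map fst (snd w)) (concat (foata_layers sim \<pi> (walk_word w)))"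
    using swap_equiv_foata_layers steps_ok_flaws[OF ok] unfolding walk_word_def by blast
  ultimately show ?thesis
    using valid_swap_lift_swap_equiv[OF supp swap] unfolding last_state_def
    by (metis prod.collapse)
qed

theorem theorem4:
  fixes \<Omega> :: "'a set" and F :: "'a set set"
    and \<rho> :: "'a set \<Rightarrow> 'a \<Rightarrow> 'a pmf"
    and sim :: "'a set \<Rightarrow> 'a set \<Rightarrow> bool"
    and SWAP :: "'a walk \<Rightarrow> 'a walk"
    and \<Lambda> :: "'a walk \<Rightarrow> 'a set"
    and \<omega> :: "'a pmf"
    and \<pi> :: "'a set \<Rightarrow> nat"
    and t :: nat
  assumes fin_\<Omega>: "finite \<Omega>" and fin_F: "finite F"
    and flaws: "\<forall>f\<in>F. f \<noteq> {} \<and> f \<subseteq> \<Omega>"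
    and supp: "\<forall>\<sigma>\<in>\<Omega>. \<forall>f\<in>flaws_at F \<sigma>. set_pmf (\<rho> f \<sigma>) \<subseteq> \<Omega>"
    and sym: "\<forall>f\<in>F. \<forall>g\<in>F. sim f g \<longrightarrow> sim g f"
    and closure: "\<forall>\<sigma> f \<sigma>'. is_step F \<rho> \<sigma> f \<sigma>' \<longrightarrow>
                    flaws_at F \<sigma>' \<subseteq> (flaws_at F \<sigma> - {f}) \<union> Gamma F sim f"
    and atom: "atomic F \<rho>"
    and swap: "is_SWAP \<Omega> F \<rho> sim SWAP"
    and strat: "is_strategy \<Omega> F \<rho> \<Lambda>"
    and init: "set_pmf \<omega> \<subseteq> \<Omega>"
    and perm: "bij_betw \<pi> F {..<card F}"
    and t_pos: "1 \<le> t"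
  shows "\<exists>Bad\<^sub>\<pi> \<Phi>. (\<forall>w\<in>Bad\<^sub>\<pi>. pi_stable_walk F sim \<pi> w) \<and>
           swapping_mapping sim SWAP (Bad \<Omega> F \<rho> \<omega> \<Lambda> t) \<Phi> \<and>
           bij_betw \<Phi> (Bad \<Omega> F \<rho> \<omega> \<Lambda> t) Bad\<^sub>\<pi>"
proof -
  let ?B = "Bad \<Omega> F \<rho> \<omega> \<Lambda> t"
  define N where "N w = concat (foata_layers sim \<pi> (walk_word w))" for w :: "'a walk"
  define \<Phi> where "\<Phi> w = (fst w, SOME xs. (valid_swap sim SWAP)\<^sup>*\<^sup>* w (fst w, xs) \<and>
      map fst xs = N w \<and> end_state (fst w) xs = last_state w)" for w :: "'a walk"
  have \<Phi>: "(valid_swap sim SWAP)\<^sup>*\<^sup>* w (\<Phi> w) \<and> walk_word (\<Phi> w) = N w \<and>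
      fst (\<Phi> w) = fst w \<and> last_state (\<Phi> w) = last_state w" if "w \<in> ?B" for w
    using someI_ex[OF walk_valid_swaps_to_foata_layers[OF supp swap, of w \<pi>]] that
    unfolding \<Phi>_def N_def Bad_def walk_word_def last_state_def by auto
  have word: "walk_word w \<noteq> [] \<and> set (walk_word w) \<subseteq> F" if "w \<in> ?B" for w
    using that t_pos steps_ok_flaws[of F \<rho> "fst w" "snd w"]
    unfolding Bad_def is_walk_def walk_word_def walk_length_def by auto
  have "pi_stable_walk F sim \<pi> (\<Phi> w)" if "w \<in> ?B" for w
    using \<Phi>[OF that] word[OF that] pi_stable_word_foata_layers[OF sym bij_betw_imp_inj_on[OF perm]]
    unfolding pi_stable_walk_def N_def by auto
  moreover have "inj_on \<Phi> ?B"
  proof (rule inj_onI)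
    fix w1 w2 assume w: "w1 \<in> ?B" "w2 \<in> ?B" and "\<Phi> w1 = \<Phi> w2"
    then have "N w1 = N w2" "fst w1 = fst w2" "last_state w1 = last_state w2"
      using \<Phi> by metis+
    moreover have "swap_equiv F sim (walk_word w) (N w)" if "w \<in> ?B" for w
      using swap_equiv_foata_layers word[OF that] unfolding N_def by blast
    ultimately show "w1 = w2"
      using Bad_eqI[OF atom supp swap w] swap_equiv_sym[OF sym] w by (metis rtranclp_trans)
  qed
  ultimately show ?thesis
    unfolding swapping_mapping_def bij_betw_def using \<Phi> by blast
qed

end
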